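(* Let $G$ be a finite group with $Z(G)=I$, let $n\in\{2,3\}$, and let $(C_1,\dots,C_n,D)$ be a tuple of conjugacy classes of $G$ with $C_1,\dots,C_n$ non-trivial and $D$ either a class of involutions or the trivial class $\{\iota\}$. For $[\underline{\sigma}]=[\sigma_1,\dots,\sigma_n,\sigma_{n+1}]\in\Sigma^i(C_1,\dots,C_n,D)$ put $[\widehat{\underline{\sigma}}]=[\sigma_1,\dots,\sigma_n,\sigma_1,\dots,\sigma_n]\in\Sigma^i(C_1,\dots,C_n,C_1,\dots,C_n)$. If $[\underline{\sigma}],[\underline{\tau}]\in\Sigma^i(C_1,\dots,C_n,D)$ and $[\underline{\tau}]\in[\underline{\sigma}]^{B_{n+1}}$, then $[\widehat{\underline{\tau}}]\in[\widehat{\underline{\sigma}}]^{B_{2n}}$.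
   Context: $\iota$ is the identity and $I$ the trivial group. For conjugacy classes $C_1,\dots,C_m$ (here the trivial class is allowed), $\Sigma^i(C_1,\dots,C_m)$ is the set of $G$-conjugacy classes $[\sigma_1,\dots,\sigma_m]$ (simultaneous conjugation) of tuples with $\sigma_j\in C_j$, $\langle\sigma_1,\dots,\sigma_m\rangle=G$, $\sigma_1\cdots\sigma_m=\iota$. The Hurwitz braid group $H_m$ is generated by $\beta_2,\dots,\beta_m$ and acts from the right by $[\underline{\sigma}]^{\beta_i}=[\sigma_1,\dots,\sigma_{i-2},\sigma_{i-1}\sigma_i\sigma_{i-1}^{-1},\sigma_{i-1},\sigma_{i+1},\dots,\sigma_m]$; the pure braid group $B_m$ is the subgroup generated by $\beta_{ij}=\beta_{i+1}^{-1}\cdots\beta_{j-1}^{-1}\beta_j^2\beta_{j-1}\cdots\beta_{i+1}$, $1\le i<j\le m$, and preserves each $\Sigma^i(C_1,\dots,C_m)$. $X^{B_m}$ denotes the $B_m$-orbit of $X$. *)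

theory Defs
  imports "HOL-Algebra.Algebra"
begin

definition group_center :: "('a, 'b) monoid_scheme \<Rightarrow> 'a set" where
  "group_center G = {z \<in> carrier G. \<forall>g \<in> carrier G. z \<otimes>\<^bsub>G\<^esub> g = g \<otimes>\<^bsub>G\<^esub> z}"

definition is_conj_class :: "('a, 'b) monoid_scheme \<Rightarrow> 'a set \<Rightarrow> bool" where
  "is_conj_class G C \<longleftrightarrow>
     (\<exists>x \<in> carrier G. C = {g \<otimes>\<^bsub>G\<^esub> x \<otimes>\<^bsub>G\<^esub> inv\<^bsub>G\<^esub> g | g. g \<in> carrier G})"

definition tuple_prod :: "('a, 'b) monoid_scheme \<Rightarrow> 'a list \<Rightarrow> 'a" where
  "tuple_prod G xs = foldr (\<lambda>x acc. x \<otimes>\<^bsub>G\<^esub> acc) xs \<one>\<^bsub>G\<^esub>"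

definition Sigma_tuples :: "('a, 'b) monoid_scheme \<Rightarrow> 'a set list \<Rightarrow> 'a list set" where
  "Sigma_tuples G Cs = {xs. length xs = length Cs \<and> (\<forall>j < length Cs. xs ! j \<in> Cs ! j)
      \<and> generate G (set xs) = carrier G \<and> tuple_prod G xs = \<one>\<^bsub>G\<^esub>}"

definition tuple_conj :: "('a, 'b) monoid_scheme \<Rightarrow> 'a \<Rightarrow> 'a list \<Rightarrow> 'a list" where
  "tuple_conj G g xs = map (\<lambda>x. g \<otimes>\<^bsub>G\<^esub> x \<otimes>\<^bsub>G\<^esub> inv\<^bsub>G\<^esub> g) xs"

definition tclass :: "('a, 'b) monoid_scheme \<Rightarrow> 'a list \<Rightarrow> 'a list set" where
  "tclass G xs = {tuple_conj G g xs | g. g \<in> carrier G}"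

definition Sigma_i :: "('a, 'b) monoid_scheme \<Rightarrow> 'a set list \<Rightarrow> 'a list set set" where
  "Sigma_i G Cs = tclass G ` Sigma_tuples G Cs"

text \<open>Hurwitz generator beta_i (1-based index i, 2 <= i <= m) and its inverse, acting on the right.\<close>
definition hur :: "('a, 'b) monoid_scheme \<Rightarrow> nat \<Rightarrow> 'a list \<Rightarrow> 'a list" where
  "hur G i xs = xs[i - 2 := xs ! (i - 2) \<otimes>\<^bsub>G\<^esub> xs ! (i - 1) \<otimes>\<^bsub>G\<^esub> inv\<^bsub>G\<^esub> (xs ! (i - 2)),
                   i - 1 := xs ! (i - 2)]"

definition hur_inv :: "('a, 'b) monoid_scheme \<Rightarrow> nat \<Rightarrow> 'a list \<Rightarrow> 'a list" where
  "hur_inv G i xs = xs[i - 2 := xs ! (i - 1),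
                       i - 1 := inv\<^bsub>G\<^esub> (xs ! (i - 1)) \<otimes>\<^bsub>G\<^esub> xs ! (i - 2) \<otimes>\<^bsub>G\<^esub> xs ! (i - 1)]"

text \<open>Braid words: letters (i, True) = beta_i, (i, False) = beta_i^{-1}; read left to right.\<close>
definition act_letter :: "('a, 'b) monoid_scheme \<Rightarrow> nat \<times> bool \<Rightarrow> 'a list \<Rightarrow> 'a list" where
  "act_letter G l xs = (if snd l then hur G (fst l) xs else hur_inv G (fst l) xs)"

definition act_word :: "('a, 'b) monoid_scheme \<Rightarrow> (nat \<times> bool) list \<Rightarrow> 'a list \<Rightarrow> 'a list" where
  "act_word G w xs = foldl (\<lambda>ys l. act_letter G l ys) xs w"

definition word_inv :: "(nat \<times> bool) list \<Rightarrow> (nat \<times> bool) list" where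
  "word_inv w = rev (map (\<lambda>(k, b). (k, \<not> b)) w)"

text \<open>beta_ij = beta_{i+1}^{-1} ... beta_{j-1}^{-1} beta_j^2 beta_{j-1} ... beta_{i+1}.\<close>
definition beta_word :: "nat \<Rightarrow> nat \<Rightarrow> (nat \<times> bool) list" where
  "beta_word i j = map (\<lambda>k. (k, False)) [Suc i..<j] @ [(j, True), (j, True)]
                   @ map (\<lambda>k. (k, True)) (rev [Suc i..<j])"

text \<open>Words representing elements of the pure braid group B_m (products of the beta_ij and their inverses).\<close>
definition pure_words :: "nat \<Rightarrow> (nat \<times> bool) list set" where
  "pure_words m = {concat ls | ls. \<forall>l \<in> set ls. \<exists>i j. 1 \<le> i \<and> i < j \<and> j \<le> m \<and>
                      (l = beta_word i j \<or> l = word_inv (beta_word i j))}"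

definition pure_orbit :: "('a, 'b) monoid_scheme \<Rightarrow> nat \<Rightarrow> 'a list set \<Rightarrow> 'a list set set" where
  "pure_orbit G m Y = (\<Union>w \<in> pure_words m. \<Union>xs \<in> Y. {tclass G (act_word G w xs)})"

end

theory Submission
  imports Defs
begin

text \<open>
  Modulo simultaneous conjugation, the Hurwitz action on tuples with product one does not see the
  last strand: on the punctured sphere the twist about the punctures i and n+1 is the twist about
  the complementary punctures, so for n = 2, 3 each generator beta_{i,n+1} acts on such
  (n+1)-tuples as a pure braid on the first n strands followed by a conjugation. Hence tau is
  conjugate to w applied to sigma for a pure braid w on the first n strands, which only moves the
  first n entries; w together with its copy shifted by n strands then carries the doubled tuple of
  sigma to the doubled tuple of tau, up to conjugation.
\<close>

subsection \<open>Braid words\<close>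

definition hurwitz_word :: "nat \<Rightarrow> (nat \<times> bool) list \<Rightarrow> bool" where
  "hurwitz_word m w \<longleftrightarrow> (\<forall>(i, s) \<in> set w. 2 \<le> i \<and> i \<le> m)"

definition shift_word :: "nat \<Rightarrow> (nat \<times> bool) list \<Rightarrow> (nat \<times> bool) list" where
  "shift_word k w = map (\<lambda>(i, s). (i + k, s)) w"

lemma hurwitz_word_simps [simp]:
  "hurwitz_word m []"
  "hurwitz_word m (l # w) \<longleftrightarrow> 2 \<le> fst l \<and> fst l \<le> m \<and> hurwitz_word m w"
  "hurwitz_word m (w @ v) \<longleftrightarrow> hurwitz_word m w \<and> hurwitz_word m v"
  by (auto simp: hurwitz_word_def)

lemma hurwitz_word_mono: "hurwitz_word m w \<Longrightarrow> m \<le> m' \<Longrightarrow> hurwitz_word m' w"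
  by (auto simp: hurwitz_word_def)

lemma word_inv_simps [simp]:
  "word_inv [] = []"
  "word_inv ((i, s) # w) = word_inv w @ [(i, \<not> s)]"
  by (simp_all add: word_inv_def)

lemma word_inv_concat: "word_inv (concat ls) = concat (rev (map word_inv ls))"
  by (induction ls) (simp_all add: word_inv_def rev_map)

lemma word_inv_word_inv [simp]: "word_inv (word_inv w) = w"
  by (induction w) (auto simp: word_inv_def rev_map)

lemma hurwitz_word_word_inv [simp]: "hurwitz_word m (word_inv w) \<longleftrightarrow> hurwitz_word m w"
  by (auto simp: hurwitz_word_def word_inv_def)

lemma hurwitz_word_beta_word: "1 \<le> i \<Longrightarrow> i < j \<Longrightarrow> j \<le> m \<Longrightarrow> hurwitz_word m (beta_word i j)"
  by (auto simp: hurwitz_word_def beta_word_def)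

lemma shift_word_beta_word: "shift_word k (beta_word i j) = beta_word (i + k) (j + k)"
proof -
  have "[Suc (i + k)..<j + k] = map (\<lambda>x. x + k) [Suc i..<j]"
    by (induction j) auto
  then show ?thesis
    by (simp add: shift_word_def beta_word_def rev_map)
qed

lemma shift_word_word_inv: "shift_word k (word_inv w) = word_inv (shift_word k w)"
  by (simp add: shift_word_def word_inv_def rev_map comp_def case_prod_beta)

lemma shift_word_concat: "shift_word k (concat ls) = concat (map (shift_word k) ls)"
  by (induction ls) (simp_all add: shift_word_def)

definition pure_generators :: "nat \<Rightarrow> (nat \<times> bool) list set" where
  "pure_generators m = {l. \<exists>i j. 1 \<le> i \<and> i < j \<and> j \<le> m \<and> (l = beta_word i j \<or> l = word_inv (beta_word i j))}"

lemma pure_words_eq: "pure_words m = {concat ls | ls. set ls \<subseteq> pure_generators m}"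
  by (auto simp: pure_words_def pure_generators_def)

lemma beta_word_in_pure_generators:
  assumes "1 \<le> i" "i < j" "j \<le> m"
  shows "beta_word i j \<in> pure_generators m" "word_inv (beta_word i j) \<in> pure_generators m"
  using assms unfolding pure_generators_def by blast+

lemma pure_generatorsE:
  assumes "l \<in> pure_generators m"
  obtains i j where "1 \<le> i" "i < j" "j \<le> m" "l = beta_word i j \<or> l = word_inv (beta_word i j)"
  using assms unfolding pure_generators_def by blast

lemma pure_generators_mono: "l \<in> pure_generators m \<Longrightarrow> m \<le> m' \<Longrightarrow> l \<in> pure_generators m'"
  by (erule pure_generatorsE) (auto simp: beta_word_in_pure_generators)

lemma word_inv_pure_generators: "l \<in> pure_generators m \<Longrightarrow> word_inv l \<in> pure_generators m"
  by (erule pure_generatorsE) (auto simp: beta_word_in_pure_generators)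

lemma shift_word_pure_generators: "l \<in> pure_generators m \<Longrightarrow> shift_word k l \<in> pure_generators (m + k)"
  by (erule pure_generatorsE) (auto simp: shift_word_beta_word shift_word_word_inv beta_word_in_pure_generators)

lemma hurwitz_word_pure_generators: "l \<in> pure_generators m \<Longrightarrow> hurwitz_word m l"
  by (erule pure_generatorsE) (auto simp: hurwitz_word_beta_word)

lemma pure_wordsI: "set ls \<subseteq> pure_generators m \<Longrightarrow> concat ls \<in> pure_words m"
  unfolding pure_words_eq by blast

lemma pure_wordsE:
  assumes "w \<in> pure_words m"
  obtains ls where "set ls \<subseteq> pure_generators m" "w = concat ls"
  using assms unfolding pure_words_eq by blast

lemma pure_words_Nil: "[] \<in> pure_words m"
  using pure_wordsI[of "[]"] by simp

lemma pure_generators_in_pure_words: "l \<in> pure_generators m \<Longrightarrow> l \<in> pure_words m"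
  using pure_wordsI[of "[l]"] by simp

lemma beta_word_in_pure_words:
  assumes "1 \<le> i" "i < j" "j \<le> m"
  shows "beta_word i j \<in> pure_words m" "word_inv (beta_word i j) \<in> pure_words m"
  using beta_word_in_pure_generators[OF assms] by (simp_all add: pure_generators_in_pure_words)

lemma pure_words_append: "u \<in> pure_words m \<Longrightarrow> v \<in> pure_words m \<Longrightarrow> u @ v \<in> pure_words m"
  by (metis pure_wordsE pure_wordsI concat_append set_append Un_least)

lemma pure_words_mono: "w \<in> pure_words m \<Longrightarrow> m \<le> m' \<Longrightarrow> w \<in> pure_words m'"
  by (metis pure_wordsE pure_wordsI pure_generators_mono subset_iff)

lemma hurwitz_word_concat: "hurwitz_word m (concat ls) \<longleftrightarrow> (\<forall>l \<in> set ls. hurwitz_word m l)"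
  by (induction ls) auto

lemma hurwitz_word_pure_words: "w \<in> pure_words m \<Longrightarrow> hurwitz_word m w"
  by (metis pure_wordsE hurwitz_word_concat hurwitz_word_pure_generators subsetD)

lemma word_inv_pure_words: "w \<in> pure_words m \<Longrightarrow> word_inv w \<in> pure_words m"
proof (erule pure_wordsE)
  fix ls assume "set ls \<subseteq> pure_generators m" "w = concat ls"
  then show "word_inv w \<in> pure_words m"
    using pure_wordsI[of "rev (map word_inv ls)" m] word_inv_pure_generators
    by (auto simp: word_inv_concat)
qed

lemma shift_word_pure_words: "w \<in> pure_words m \<Longrightarrow> shift_word k w \<in> pure_words (m + k)"
proof (erule pure_wordsE)
  fix ls assume "set ls \<subseteq> pure_generators m" "w = concat ls"
  then show "shift_word k w \<in> pure_words (m + k)"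
    using pure_wordsI[of "map (shift_word k) ls" "m + k"] shift_word_pure_generators
    by (auto simp: shift_word_concat)
qed


subsection \<open>The Hurwitz action on lists\<close>

lemma act_word_simps [simp]:
  "act_word G [] xs = xs"
  "act_word G (l # w) xs = act_word G w (act_letter G l xs)"
  "act_word G (w @ v) xs = act_word G v (act_word G w xs)"
  by (simp_all add: act_word_def)

lemma length_act_letter [simp]: "length (act_letter G l xs) = length xs"
  by (simp add: act_letter_def hur_def hur_inv_def)

lemma length_act_word [simp]: "length (act_word G w xs) = length xs"
  by (induction w arbitrary: xs) auto

lemma act_letter_two:
  "act_letter G (Suc (Suc 0), s) (p # q # zs) =
    (if s then (p \<otimes>\<^bsub>G\<^esub> q \<otimes>\<^bsub>G\<^esub> inv\<^bsub>G\<^esub> p) # p # zs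
     else q # (inv\<^bsub>G\<^esub> q \<otimes>\<^bsub>G\<^esub> p \<otimes>\<^bsub>G\<^esub> q) # zs)"
  by (simp add: act_letter_def hur_def hur_inv_def)

lemma act_letter_shift:
  "2 \<le> i \<Longrightarrow> length ys = k \<Longrightarrow> act_letter G (i + k, s) (ys @ zs) = ys @ act_letter G (i, s) zs"
  by (auto simp: act_letter_def hur_def hur_inv_def list_update_append nth_append)

lemma act_letter_Cons: "2 \<le> i \<Longrightarrow> act_letter G (Suc i, s) (x # xs) = x # act_letter G (i, s) xs"
  using act_letter_shift[of i "[x]" 1 G s xs] by simp

lemma act_letter_append:
  "2 \<le> i \<Longrightarrow> i \<le> length xs \<Longrightarrow> act_letter G (i, s) (xs @ zs) = act_letter G (i, s) xs @ zs"
  by (auto simp: act_letter_def hur_def hur_inv_def list_update_append nth_append)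

lemma act_letter_split:
  assumes "2 \<le> i" "i \<le> length xs"
  obtains ys p q zs where "xs = ys @ p # q # zs" "length ys + 2 = i"
proof
  let ?ys = "take (i - 2) xs" and ?zs = "drop i xs"
  have "drop (i - 2) xs = xs ! (i - 2) # drop (i - 1) xs" "drop (i - 1) xs = xs ! (i - 1) # ?zs"
    using assms Cons_nth_drop_Suc[of "i - 2" xs] Cons_nth_drop_Suc[of "i - 1" xs]
    by (simp_all add: Suc_diff_Suc numeral_2_eq_2)
  then show "xs = ?ys @ xs ! (i - 2) # xs ! (i - 1) # ?zs"
    by (metis append_take_drop_id)
  show "length ?ys + 2 = i"
    using assms by simp
qed

lemma act_letter_append_two:
  "act_letter G (Suc (Suc (length ys)), s) (ys @ zs) = ys @ act_letter G (Suc (Suc 0), s) zs"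
  using act_letter_shift[of 2 ys "length ys" G s zs] by (simp add: numeral_2_eq_2)

lemma act_word_append:
  "hurwitz_word (length xs) w \<Longrightarrow> act_word G w (xs @ zs) = act_word G w xs @ zs"
  by (induction w arbitrary: xs) (auto simp: act_letter_append)

lemma act_word_shift:
  "hurwitz_word m w \<Longrightarrow> length ys = k \<Longrightarrow> act_word G (shift_word k w) (ys @ zs) = ys @ act_word G w zs"
  by (induction w arbitrary: zs) (auto simp: shift_word_def act_letter_shift)

lemma act_word_double:
  assumes "hurwitz_word (length xs) w"
  shows "act_word G (w @ shift_word (length xs) w) (xs @ xs) = act_word G w xs @ act_word G w xs"
  using assms by (simp add: act_word_append act_word_shift)


subsection \<open>The action on tuples of group elements\<close>

definition prod_one_tuples :: "('a, 'b) monoid_scheme \<Rightarrow> nat \<Rightarrow> 'a list set" where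
  "prod_one_tuples G m = {xs. length xs = m \<and> set xs \<subseteq> carrier G \<and> tuple_prod G xs = \<one>\<^bsub>G\<^esub>}"

lemma (in group) inv_mult_cancel_left: "x \<in> carrier G \<Longrightarrow> y \<in> carrier G \<Longrightarrow> inv x \<otimes> (x \<otimes> y) = y"
  by (simp add: m_assoc [symmetric])

lemma (in group) mult_inv_cancel_left: "x \<in> carrier G \<Longrightarrow> y \<in> carrier G \<Longrightarrow> x \<otimes> (inv x \<otimes> y) = y"
  by (simp add: m_assoc [symmetric])

lemmas (in group) group_normalize = m_assoc inv_mult_group inv_mult_cancel_left mult_inv_cancel_left

lemma tuple_prod_simps [simp]:
  "tuple_prod G [] = \<one>\<^bsub>G\<^esub>"
  "tuple_prod G (x # xs) = x \<otimes>\<^bsub>G\<^esub> tuple_prod G xs"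
  by (simp_all add: tuple_prod_def)

lemma (in group) tuple_prod_closed: "set xs \<subseteq> carrier G \<Longrightarrow> tuple_prod G xs \<in> carrier G"
  by (induction xs) auto

lemma (in group) tuple_prod_append:
  "set xs \<subseteq> carrier G \<Longrightarrow> set ys \<subseteq> carrier G \<Longrightarrow> tuple_prod G (xs @ ys) = tuple_prod G xs \<otimes> tuple_prod G ys"
  by (induction xs) (auto simp: m_assoc tuple_prod_closed)

lemma tuple_conj_simps [simp]:
  "tuple_conj G g [] = []"
  "tuple_conj G g (x # xs) = (g \<otimes>\<^bsub>G\<^esub> x \<otimes>\<^bsub>G\<^esub> inv\<^bsub>G\<^esub> g) # tuple_conj G g xs"
  "tuple_conj G g (xs @ ys) = tuple_conj G g xs @ tuple_conj G g ys"
  "length (tuple_conj G g xs) = length xs"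
  "take n (tuple_conj G g xs) = tuple_conj G g (take n xs)"
  by (simp_all add: tuple_conj_def take_map)

lemma (in group) tuple_conj_closed:
  "g \<in> carrier G \<Longrightarrow> set xs \<subseteq> carrier G \<Longrightarrow> set (tuple_conj G g xs) \<subseteq> carrier G"
  by (auto simp: tuple_conj_def)

lemma (in group) tuple_conj_one: "set xs \<subseteq> carrier G \<Longrightarrow> tuple_conj G \<one> xs = xs"
  by (induction xs) auto

lemma (in group) tuple_conj_mult:
  "g \<in> carrier G \<Longrightarrow> h \<in> carrier G \<Longrightarrow> set xs \<subseteq> carrier G \<Longrightarrow>
   tuple_conj G g (tuple_conj G h xs) = tuple_conj G (g \<otimes> h) xs"
  by (induction xs) (auto simp: group_normalize)

lemma (in group) prod_one_tuplesE:
  assumes "xs \<in> prod_one_tuples G (Suc m)"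
  obtains ys where "length ys = m" "set ys \<subseteq> carrier G" "xs = ys @ [inv (tuple_prod G ys)]"
proof -
  obtain ys z where xs: "xs = ys @ [z]"
    using assms by (cases xs rule: rev_cases) (auto simp: prod_one_tuples_def)
  have ys: "length ys = m" "set ys \<subseteq> carrier G" and z: "z \<in> carrier G"
    using assms by (auto simp: prod_one_tuples_def xs)
  have "tuple_prod G ys \<otimes> z = \<one>"
    using assms ys z by (simp add: prod_one_tuples_def xs tuple_prod_append)
  then have "z = inv (tuple_prod G ys)"
    using ys z by (metis inv_comm inv_equality tuple_prod_closed)
  with that ys xs show ?thesis
    by blast
qed

lemma (in group) act_letter_closed:
  assumes "2 \<le> i" "i \<le> length xs" "set xs \<subseteq> carrier G"
  shows "set (act_letter G (i, s) xs) \<subseteq> carrier G"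
proof -
  obtain ys p q zs where "xs = ys @ p # q # zs" "length ys + 2 = i"
    using act_letter_split assms(1,2) .
  with assms(3) show ?thesis
    by (cases s) (auto simp: act_letter_append_two act_letter_two)
qed

lemma (in group) tuple_prod_act_letter:
  assumes "2 \<le> i" "i \<le> length xs" "set xs \<subseteq> carrier G"
  shows "tuple_prod G (act_letter G (i, s) xs) = tuple_prod G xs"
proof -
  obtain ys p q zs where "xs = ys @ p # q # zs" "length ys + 2 = i"
    using act_letter_split assms(1,2) .
  with assms(3) show ?thesis
    by (auto simp: act_letter_append_two act_letter_two tuple_prod_append
        tuple_prod_closed group_normalize)
qed

lemma (in group) act_letter_tuple_conj:
  assumes "2 \<le> i" "i \<le> length xs" "set xs \<subseteq> carrier G" "g \<in> carrier G"
  shows "act_letter G (i, s) (tuple_conj G g xs) = tuple_conj G g (act_letter G (i, s) xs)"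
proof -
  obtain ys p q zs where "xs = ys @ p # q # zs" "length ys + 2 = i"
    using act_letter_split assms(1,2) .
  with assms(3,4) show ?thesis
    using act_letter_append_two[of G "tuple_conj G g ys" s]
    by (auto simp: act_letter_append_two act_letter_two group_normalize)
qed

lemma (in group) act_letter_inverse:
  assumes "2 \<le> i" "i \<le> length xs" "set xs \<subseteq> carrier G"
  shows "act_letter G (i, \<not> s) (act_letter G (i, s) xs) = xs"
proof -
  obtain ys p q zs where "xs = ys @ p # q # zs" "length ys + 2 = i"
    using act_letter_split assms(1,2) .
  with assms(3) show ?thesis
    by (auto simp: act_letter_append_two act_letter_two group_normalize)
qed

lemma (in group) act_word_closed:
  "hurwitz_word (length xs) w \<Longrightarrow> set xs \<subseteq> carrier G \<Longrightarrow> set (act_word G w xs) \<subseteq> carrier G"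
proof (induction w arbitrary: xs)
  case (Cons l w)
  then show ?case
    by (cases l) (simp add: act_letter_closed)
qed simp

lemma (in group) tuple_prod_act_word:
  "hurwitz_word (length xs) w \<Longrightarrow> set xs \<subseteq> carrier G \<Longrightarrow> tuple_prod G (act_word G w xs) = tuple_prod G xs"
  by (induction w arbitrary: xs) (auto simp: act_letter_closed tuple_prod_act_letter)

lemma (in group) act_word_tuple_conj:
  "hurwitz_word (length xs) w \<Longrightarrow> set xs \<subseteq> carrier G \<Longrightarrow> g \<in> carrier G \<Longrightarrow>
   act_word G w (tuple_conj G g xs) = tuple_conj G g (act_word G w xs)"
  by (induction w arbitrary: xs) (auto simp: act_letter_closed act_letter_tuple_conj)

lemma (in group) act_word_word_inv:
  "hurwitz_word (length xs) w \<Longrightarrow> set xs \<subseteq> carrier G \<Longrightarrow> act_word G (word_inv w) (act_word G w xs) = xs"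
  by (induction w arbitrary: xs) (auto simp: act_letter_closed act_letter_inverse)

lemma (in group) act_word_prod_one_tuples:
  "hurwitz_word m w \<Longrightarrow> xs \<in> prod_one_tuples G m \<Longrightarrow> act_word G w xs \<in> prod_one_tuples G m"
  by (simp add: prod_one_tuples_def act_word_closed tuple_prod_act_word)

lemma (in group) tclass_self: "set xs \<subseteq> carrier G \<Longrightarrow> xs \<in> tclass G xs"
  unfolding tclass_def using tuple_conj_one by force

lemma (in group) tclass_tuple_conj:
  assumes "g \<in> carrier G" "set xs \<subseteq> carrier G"
  shows "tclass G (tuple_conj G g xs) = tclass G xs"
proof
  show "tclass G (tuple_conj G g xs) \<subseteq> tclass G xs"
    using assms by (auto simp: tclass_def tuple_conj_mult)
  show "tclass G xs \<subseteq> tclass G (tuple_conj G g xs)"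
  proof
    fix ys assume "ys \<in> tclass G xs"
    then obtain h where "h \<in> carrier G" "ys = tuple_conj G h xs"
      by (auto simp: tclass_def)
    then have "ys = tuple_conj G (h \<otimes> inv g) (tuple_conj G g xs)" and "h \<otimes> inv g \<in> carrier G"
      using assms by (simp_all add: tuple_conj_mult m_assoc)
    then show "ys \<in> tclass G (tuple_conj G g xs)"
      by (auto simp: tclass_def)
  qed
qed

lemma (in group) tclass_closed:
  "ys \<in> tclass G xs \<Longrightarrow> set xs \<subseteq> carrier G \<Longrightarrow> length ys = length xs \<and> set ys \<subseteq> carrier G"
  by (auto simp: tclass_def dest: tuple_conj_closed)

lemma (in group) tclass_eqI: "ys \<in> tclass G xs \<Longrightarrow> set xs \<subseteq> carrier G \<Longrightarrow> tclass G ys = tclass G xs"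
  by (auto simp: tclass_def [of G xs] tclass_tuple_conj)

lemma (in group) tclass_act_word:
  assumes "tclass G xs = tclass G ys" "hurwitz_word (length xs) w"
    and "set xs \<subseteq> carrier G" "set ys \<subseteq> carrier G"
  shows "tclass G (act_word G w xs) = tclass G (act_word G w ys)"
proof -
  obtain g where "g \<in> carrier G" "ys = tuple_conj G g xs"
    using tclass_self[OF assms(4)] assms(1) by (auto simp: tclass_def)
  with assms(2,3) show ?thesis
    by (simp add: act_word_tuple_conj tclass_tuple_conj act_word_closed)
qed

lemma doubled_prefix_tclass:
  "ys \<in> tclass G xs \<Longrightarrow> take n ys @ take n ys \<in> tclass G (take n xs @ take n xs)"
  by (auto simp: tclass_def)


subsection \<open>Forgetting the last strand\<close>

definition reducible_to_pure_words :: "('a, 'b) monoid_scheme \<Rightarrow> nat \<Rightarrow> nat \<Rightarrow> (nat \<times> bool) list \<Rightarrow> bool" where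
  "reducible_to_pure_words G m k v \<longleftrightarrow>
     (\<forall>xs \<in> prod_one_tuples G m. \<exists>w \<in> pure_words k. tclass G (act_word G v xs) = tclass G (act_word G w xs))"

lemma reducible_to_pure_words_self: "w \<in> pure_words k \<Longrightarrow> reducible_to_pure_words G m k w"
  by (auto simp: reducible_to_pure_words_def)

lemma (in group) reducible_to_pure_wordsI:
  assumes "k \<le> m"
    and "\<And>xs. xs \<in> prod_one_tuples G m \<Longrightarrow>
           \<exists>g \<in> carrier G. \<exists>w \<in> pure_words k. act_word G v xs = tuple_conj G g (act_word G w xs)"
  shows "reducible_to_pure_words G m k v"
  unfolding reducible_to_pure_words_def
proof
  fix xs assume xs: "xs \<in> prod_one_tuples G m"
  then obtain g w where "g \<in> carrier G" "w \<in> pure_words k"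
    and "act_word G v xs = tuple_conj G g (act_word G w xs)"
    using assms(2) by blast
  moreover have "set (act_word G w xs) \<subseteq> carrier G"
    using act_word_closed hurwitz_word_mono[OF hurwitz_word_pure_words[OF \<open>w \<in> pure_words k\<close>] assms(1)] xs
    by (simp add: prod_one_tuples_def)
  ultimately show "\<exists>w \<in> pure_words k. tclass G (act_word G v xs) = tclass G (act_word G w xs)"
    by (auto simp: tclass_tuple_conj)
qed

lemma (in group) reducible_to_pure_words_append:
  assumes "k \<le> m" "hurwitz_word m v" "hurwitz_word m u"
    and "reducible_to_pure_words G m k v" "reducible_to_pure_words G m k u"
  shows "reducible_to_pure_words G m k (v @ u)"
  unfolding reducible_to_pure_words_def
proof
  fix xs assume xs: "xs \<in> prod_one_tuples G m"
  obtain w where w: "w \<in> pure_words k" "tclass G (act_word G v xs) = tclass G (act_word G w xs)"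
    using assms(4) xs by (auto simp: reducible_to_pure_words_def)
  have w_m: "hurwitz_word m w"
    using hurwitz_word_pure_words[OF w(1)] assms(1) by (rule hurwitz_word_mono)
  have wxs: "act_word G w xs \<in> prod_one_tuples G m"
    using act_word_prod_one_tuples[OF w_m xs] .
  obtain w' where w': "w' \<in> pure_words k"
    "tclass G (act_word G u (act_word G w xs)) = tclass G (act_word G w' (act_word G w xs))"
    using assms(5) wxs by (auto simp: reducible_to_pure_words_def)
  have "tclass G (act_word G (v @ u) xs) = tclass G (act_word G u (act_word G w xs))"
    using tclass_act_word[OF w(2)] act_word_prod_one_tuples[OF assms(2) xs] wxs assms(3) xs
    by (simp add: prod_one_tuples_def)
  also have "\<dots> = tclass G (act_word G (w @ w') xs)"
    using w'(2) by simp
  finally show "\<exists>w \<in> pure_words k. tclass G (act_word G (v @ u) xs) = tclass G (act_word G w xs)"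
    using pure_words_append[OF w(1) w'(1)] by blast
qed

lemma (in group) reducible_to_pure_words_word_inv:
  assumes "k \<le> m" "hurwitz_word m v" "reducible_to_pure_words G m k v"
  shows "reducible_to_pure_words G m k (word_inv v)"
  unfolding reducible_to_pure_words_def
proof
  fix xs assume xs: "xs \<in> prod_one_tuples G m"
  let ?ys = "act_word G (word_inv v) xs"
  have ys: "?ys \<in> prod_one_tuples G m"
    using act_word_prod_one_tuples[of m "word_inv v"] assms(2) xs by simp
  obtain w where w: "w \<in> pure_words k" "tclass G (act_word G v ?ys) = tclass G (act_word G w ?ys)"
    using assms(3) ys by (auto simp: reducible_to_pure_words_def)
  have w_m: "hurwitz_word m w"
    using hurwitz_word_pure_words[OF w(1)] assms(1) by (rule hurwitz_word_mono)
  have "act_word G v ?ys = xs"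
    using act_word_word_inv[of xs "word_inv v"] assms(2) xs by (simp add: prod_one_tuples_def)
  then have "tclass G (act_word G (word_inv w) xs) = tclass G (act_word G (word_inv w) (act_word G w ?ys))"
    using tclass_act_word[of xs "act_word G w ?ys" "word_inv w"] w(2) w_m xs ys
      act_word_prod_one_tuples[OF w_m ys]
    by (simp add: prod_one_tuples_def)
  also have "\<dots> = tclass G ?ys"
    using act_word_word_inv[of ?ys w] w_m ys by (simp add: prod_one_tuples_def)
  finally show "\<exists>w \<in> pure_words k. tclass G ?ys = tclass G (act_word G w xs)"
    using word_inv_pure_words[OF w(1)] by metis
qed

lemma (in group) three_strand_relations:
  assumes "a \<in> carrier G" "b \<in> carrier G"
  defines "xs \<equiv> [a, b, inv (a \<otimes> b)]"
  shows "act_word G (beta_word 1 3) xs = tuple_conj G (inv b) xs"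
    and "act_word G (beta_word 2 3) xs = tuple_conj G (inv a) xs"
  using assms
  by (simp_all add: beta_word_def upt_rec numeral_eq_Suc act_letter_Cons act_letter_two group_normalize)

lemma (in group) four_strand_relations:
  assumes "a \<in> carrier G" "b \<in> carrier G" "c \<in> carrier G"
  defines "xs \<equiv> [a, b, c, inv (a \<otimes> b \<otimes> c)]"
  shows "act_word G (beta_word 1 4) xs = tuple_conj G (inv c \<otimes> inv b) (act_word G (beta_word 2 3) xs)"
    and "act_word G (beta_word 2 4) xs =
           tuple_conj G (inv c \<otimes> b \<otimes> c) (act_word G (word_inv (beta_word 2 3) @ word_inv (beta_word 1 2)) xs)"
    and "act_word G (beta_word 3 4) xs = tuple_conj G (inv b \<otimes> inv a) (act_word G (beta_word 1 2) xs)"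
  using assms
  by (simp_all add: beta_word_def upt_rec numeral_eq_Suc act_letter_Cons act_letter_two group_normalize)

lemma (in group) reducible_to_pure_words_three_strands:
  assumes "i \<in> {1, 2}"
  shows "reducible_to_pure_words G 3 2 (beta_word i 3)"
proof (rule reducible_to_pure_wordsI)
  fix xs assume "xs \<in> prod_one_tuples G 3"
  then have "xs \<in> prod_one_tuples G (Suc 2)"
    by simp
  then obtain ys where ys: "length ys = 2" "set ys \<subseteq> carrier G" "xs = ys @ [inv (tuple_prod G ys)]"
    by (rule prod_one_tuplesE)
  then obtain a b where ab: "a \<in> carrier G" "b \<in> carrier G" "xs = [a, b, inv (a \<otimes> b)]"
    by (auto simp: numeral_2_eq_2 length_Suc_conv)
  from assms consider "i = 1" | "i = 2"
    by blast
  then show "\<exists>g \<in> carrier G. \<exists>w \<in> pure_words 2. act_word G (beta_word i 3) xs = tuple_conj G g (act_word G w xs)"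
  proof cases
    case 1
    then show ?thesis
      using ab three_strand_relations(1)[OF ab(1,2)] pure_words_Nil
      by (intro bexI[of _ "inv b"] bexI[of _ "[]"]) simp_all
  next
    case 2
    then show ?thesis
      using ab three_strand_relations(2)[OF ab(1,2)] pure_words_Nil
      by (intro bexI[of _ "inv a"] bexI[of _ "[]"]) simp_all
  qed
qed simp

lemma (in group) reducible_to_pure_words_four_strands:
  assumes "i \<in> {1, 2, 3}"
  shows "reducible_to_pure_words G 4 3 (beta_word i 4)"
proof (rule reducible_to_pure_wordsI)
  fix xs assume "xs \<in> prod_one_tuples G 4"
  then have "xs \<in> prod_one_tuples G (Suc 3)"
    by simp
  then obtain ys where ys: "length ys = 3" "set ys \<subseteq> carrier G" "xs = ys @ [inv (tuple_prod G ys)]"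
    by (rule prod_one_tuplesE)
  then obtain a b c where abc: "a \<in> carrier G" "b \<in> carrier G" "c \<in> carrier G"
    "xs = [a, b, c, inv (a \<otimes> b \<otimes> c)]"
    by (auto simp: numeral_3_eq_3 length_Suc_conv m_assoc)
  from assms consider "i = 1" | "i = 2" | "i = 3"
    by blast
  then show "\<exists>g \<in> carrier G. \<exists>w \<in> pure_words 3. act_word G (beta_word i 4) xs = tuple_conj G g (act_word G w xs)"
  proof cases
    case 1
    then show ?thesis
      using abc four_strand_relations(1)[OF abc(1-3)] beta_word_in_pure_words[of 2 3 3]
      by (intro bexI[of _ "inv c \<otimes> inv b"] bexI[of _ "beta_word 2 3"]) simp_all
  next
    case 2
    then show ?thesis
      using abc four_strand_relations(2)[OF abc(1-3)]
        pure_words_append[OF beta_word_in_pure_words(2)[of 2 3 3] beta_word_in_pure_words(2)[of 1 2 3]]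
      by (intro bexI[of _ "inv c \<otimes> b \<otimes> c"] bexI[of _ "word_inv (beta_word 2 3) @ word_inv (beta_word 1 2)"])
        simp_all
  next
    case 3
    then show ?thesis
      using abc four_strand_relations(3)[OF abc(1-3)] beta_word_in_pure_words[of 1 2 3]
      by (intro bexI[of _ "inv b \<otimes> inv a"] bexI[of _ "beta_word 1 2"]) simp_all
  qed
qed simp

lemma (in group) reducible_to_pure_words_generator:
  assumes n: "n \<in> {2, 3}" and l: "l \<in> pure_generators (Suc n)"
  shows "reducible_to_pure_words G (Suc n) n l"
proof -
  obtain i j where ij: "1 \<le> i" "i < j" "j \<le> Suc n"
    and l_cases: "l = beta_word i j \<or> l = word_inv (beta_word i j)"
    using l by (rule pure_generatorsE)
  show ?thesis
  proof (cases "j = Suc n")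
    case True
    have "i < Suc n"
      using ij True by simp
    with n ij(1) consider "n = 2" "i \<in> {1, 2}" | "n = 3" "i \<in> {1, 2, 3}"
      by fastforce
    then have "reducible_to_pure_words G (Suc n) n (beta_word i (Suc n))"
      by cases (simp_all add: reducible_to_pure_words_three_strands reducible_to_pure_words_four_strands)
    moreover have "hurwitz_word (Suc n) (beta_word i (Suc n))"
      using ij True by (simp add: hurwitz_word_beta_word)
    ultimately show ?thesis
      using l_cases True reducible_to_pure_words_word_inv by auto
  next
    case False
    then have "l \<in> pure_words n"
      using l_cases ij beta_word_in_pure_words[of i j n] by auto
    then show ?thesis
      by (rule reducible_to_pure_words_self)
  qed
qed

lemma (in group) reducible_to_pure_words_Suc:
  assumes n: "n \<in> {2, 3}" and w: "w \<in> pure_words (Suc n)"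
  shows "reducible_to_pure_words G (Suc n) n w"
proof -
  obtain ls where "set ls \<subseteq> pure_generators (Suc n)" "w = concat ls"
    using w by (rule pure_wordsE)
  then show ?thesis
  proof (induction ls arbitrary: w)
    case Nil
    then show ?case
      using reducible_to_pure_words_self[OF pure_words_Nil] by simp
  next
    case (Cons l ls)
    then show ?case
      using reducible_to_pure_words_append[of n "Suc n" l "concat ls"]
        reducible_to_pure_words_generator[OF n] hurwitz_word_pure_generators hurwitz_word_concat
      by (auto simp: subset_iff)
  qed
qed

lemma (in group) Sigma_tuples_prod_one:
  assumes "\<forall>C \<in> set Cs. is_conj_class G C" "xs \<in> Sigma_tuples G Cs"
  shows "xs \<in> prod_one_tuples G (length Cs)"
proof -
  have "set xs \<subseteq> carrier G"
  proof
    fix x assume "x \<in> set xs"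
    then obtain j where "j < length Cs" "x \<in> Cs ! j"
      using assms(2) by (auto simp: Sigma_tuples_def in_set_conv_nth)
    then show "x \<in> carrier G"
      using assms(1) nth_mem by (fastforce simp: is_conj_class_def)
  qed
  with assms(2) show ?thesis
    by (simp add: Sigma_tuples_def prod_one_tuples_def)
qed

lemma (in group) pure_orbit_forget_last_strand:
  assumes n: "n \<in> {2, 3}" and \<sigma>: "\<sigma> \<in> prod_one_tuples G (Suc n)"
    and \<tau>: "tclass G \<tau> \<in> pure_orbit G (Suc n) (tclass G \<sigma>)"
  obtains v where "v \<in> pure_words n" "tclass G \<tau> = tclass G (act_word G v \<sigma>)"
proof -
  obtain w xs where w: "w \<in> pure_words (Suc n)" and xs: "xs \<in> tclass G \<sigma>"
    and \<tau>_class: "tclass G \<tau> = tclass G (act_word G w xs)"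
    using \<tau> by (auto simp: pure_orbit_def)
  have \<sigma>_carrier: "set \<sigma> \<subseteq> carrier G"
    using \<sigma> by (simp add: prod_one_tuples_def)
  obtain v where v: "v \<in> pure_words n" "tclass G (act_word G w \<sigma>) = tclass G (act_word G v \<sigma>)"
    using reducible_to_pure_words_Suc[OF n w] \<sigma> by (auto simp: reducible_to_pure_words_def)
  have "tclass G \<tau> = tclass G (act_word G w \<sigma>)"
    using \<tau>_class tclass_act_word[OF tclass_eqI[OF xs \<sigma>_carrier]] tclass_closed[OF xs \<sigma>_carrier]
      hurwitz_word_pure_words[OF w] \<sigma> by (simp add: prod_one_tuples_def)
  with v that show ?thesis
    by simp
qed

lemma (in group) doubled_prefix_in_pure_orbit:
  assumes v: "v \<in> pure_words n" and t: "length t = n" "set t \<subseteq> carrier G"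
    and \<tau>: "\<tau> \<in> tclass G (act_word G v t @ zs)"
  shows "tclass G (take n \<tau> @ take n \<tau>) \<in> pure_orbit G (2 * n) (tclass G (t @ t))"
proof -
  let ?u = "act_word G v t"
  have v_n: "hurwitz_word (length t) v"
    using hurwitz_word_pure_words[OF v] t(1) by simp
  have "take n \<tau> @ take n \<tau> \<in> tclass G (?u @ ?u)"
    using doubled_prefix_tclass[OF \<tau>, of n] t(1) by simp
  moreover have "set (?u @ ?u) \<subseteq> carrier G"
    using act_word_closed[OF v_n t(2)] by simp
  ultimately have "tclass G (take n \<tau> @ take n \<tau>) = tclass G (?u @ ?u)"
    by (rule tclass_eqI)
  also have "?u @ ?u = act_word G (v @ shift_word n v) (t @ t)"
    using act_word_double[OF v_n, of G, symmetric] t(1) by simp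
  finally have "tclass G (take n \<tau> @ take n \<tau>) = tclass G (act_word G (v @ shift_word n v) (t @ t))" .
  moreover have "v @ shift_word n v \<in> pure_words (2 * n)"
    using pure_words_append pure_words_mono[OF v] shift_word_pure_words[OF v] by (simp add: mult_2)
  moreover have "t @ t \<in> tclass G (t @ t)"
    using tclass_self t(2) by simp
  ultimately show ?thesis
    unfolding pure_orbit_def by blast
qed

theorem proposition10:
  fixes G (structure)
    and n :: nat and Cs :: "'a set list" and D :: "'a set" and \<sigma> \<tau> :: "'a list"
  assumes "group G" and "finite (carrier G)"
    and "group_center G = {\<one>}"
    and "n \<in> {2, 3}"
    and "length Cs = n"
    and "\<forall>C \<in> set Cs. is_conj_class G C \<and> C \<noteq> {\<one>}"
    and "is_conj_class G D"
    and "D = {\<one>} \<or> (\<forall>x \<in> D. group.ord G x = 2)"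
    and "\<sigma> \<in> Sigma_tuples G (Cs @ [D])"
    and "\<tau> \<in> Sigma_tuples G (Cs @ [D])"
    and "tclass G \<tau> \<in> pure_orbit G (n + 1) (tclass G \<sigma>)"
  shows "tclass G (take n \<tau> @ take n \<tau>) \<in> pure_orbit G (2 * n) (tclass G (take n \<sigma> @ take n \<sigma>))"
proof -
  interpret group G by fact
  have \<sigma>: "\<sigma> \<in> prod_one_tuples G (Suc n)" and \<tau>: "\<tau> \<in> prod_one_tuples G (Suc n)"
    using Sigma_tuples_prod_one[of "Cs @ [D]"] assms(5-7,9,10) by auto
  have "tclass G \<tau> \<in> pure_orbit G (Suc n) (tclass G \<sigma>)"
    using assms(11) by simp
  then obtain v where v: "v \<in> pure_words n" and v_class: "tclass G \<tau> = tclass G (act_word G v \<sigma>)"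
    by (rule pure_orbit_forget_last_strand[OF assms(4) \<sigma>])
  have "act_word G v \<sigma> = act_word G v (take n \<sigma>) @ drop n \<sigma>"
    using act_word_append[of "take n \<sigma>" v G "drop n \<sigma>"] hurwitz_word_pure_words[OF v] \<sigma>
    by (simp add: prod_one_tuples_def)
  then have "\<tau> \<in> tclass G (act_word G v (take n \<sigma>) @ drop n \<sigma>)"
    using v_class tclass_self \<tau> by (auto simp: prod_one_tuples_def)
  moreover have "length (take n \<sigma>) = n" "set (take n \<sigma>) \<subseteq> carrier G"
    using \<sigma> set_take_subset[of n \<sigma>] by (auto simp: prod_one_tuples_def)
  ultimately show ?thesis
    using doubled_prefix_in_pure_orbit[OF v] by blast
qed

end
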